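(* Let $d,d'\ge 1$, let $\{\ket{\Phi_b}\}_{b=1}^{dd'}$ be an orthonormal basis of $\mathbb{C}^{d}\otimes\mathbb{C}^{d'}$, and let $\ket\psi\in\mathbb{C}^{d'}$ be a unit vector. Define the operators on $\mathbb{C}^d$ $$\mu_b=(I\otimes\bra\psi)\,\ket{\Phi_b}\!\bra{\Phi_b}\,(I\otimes\ket\psi),\qquad b=1,\dots,dd'.$$ Then $s_{\boldsymbol\mu}\equiv\dim\operatorname{span}(\{\mu_b\}_{b=1}^{dd'})\ge d$.
   Context: The family $\boldsymbol\mu=(\mu_b)_b$ is a POVM on $\mathbb{C}^d$ (positive operators summing to the identity). The span is the complex linear span inside the space of linear operators on $\mathbb{C}^d$. *)

theory Defs
  imports Complex_Main "HOL-Library.Cardinality" "HOL-Library.Function_Algebras"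
begin

text \<open>Vectors in C^n are functions from a finite index type to complex;
  C^d \<otimes> C^d' is indexed by the product type. Operators on C^d are
  d x d complex matrices, i.e. functions 'a \<Rightarrow> 'a \<Rightarrow> complex.\<close>

definition cinner :: "('c::finite \<Rightarrow> complex) \<Rightarrow> ('c \<Rightarrow> complex) \<Rightarrow> complex" where
  "cinner u v = (\<Sum>x\<in>UNIV. cnj (u x) * v x)"

text \<open>(I \<otimes> \<langle>psi|) applied to a vector of C^d \<otimes> C^d'.\<close>
definition contract_snd :: "('b::finite \<Rightarrow> complex) \<Rightarrow> ('a::finite \<times> 'b \<Rightarrow> complex) \<Rightarrow> ('a \<Rightarrow> complex)" where
  "contract_snd psi Phi = (\<lambda>i. \<Sum>k\<in>UNIV. cnj (psi k) * Phi (i, k))"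

definition outer :: "('a \<Rightarrow> complex) \<Rightarrow> ('a \<Rightarrow> 'a \<Rightarrow> complex)" where
  "outer v = (\<lambda>i j. v i * cnj (v j))"

text \<open>mu_b = (I \<otimes> \<langle>psi|) |Phi_b\<rangle>\<langle>Phi_b| (I \<otimes> |psi\<rangle>)
  = |w_b\<rangle>\<langle>w_b| with w_b = (I \<otimes> \<langle>psi|)|Phi_b\<rangle>.\<close>
definition mu :: "(nat \<Rightarrow> ('a::finite \<times> 'b::finite \<Rightarrow> complex)) \<Rightarrow> ('b \<Rightarrow> complex) \<Rightarrow> nat \<Rightarrow> ('a \<Rightarrow> 'a \<Rightarrow> complex)" where
  "mu Phi psi b = outer (contract_snd psi (Phi b))"

definition opscale :: "complex \<Rightarrow> ('a \<Rightarrow> 'a \<Rightarrow> complex) \<Rightarrow> ('a \<Rightarrow> 'a \<Rightarrow> complex)" where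
  "opscale c M = (\<lambda>i j. c * M i j)"

end

theory Submission
  imports Defs
begin

(* Write mu_b = |w_b><w_b| with w_b = (I (x) <psi|) Phi_b.  The d d' orthonormal vectors Phi_b
   span C^d (x) C^d', and contracting with the unit vector psi is a linear surjection onto C^d,
   so the w_b span C^d and d of them are linearly independent.  Rank-one operators |c><c| of
   linearly independent vectors c are again linearly independent, which gives d independent mu_b. *)

definition vscale :: "complex \<Rightarrow> ('c \<Rightarrow> complex) \<Rightarrow> ('c \<Rightarrow> complex)" where
  "vscale c v = (\<lambda>x. c * v x)"

interpretation VS: vector_space "vscale :: complex \<Rightarrow> ('c \<Rightarrow> complex) \<Rightarrow> _"
  by unfold_locales (auto simp: vscale_def algebra_simps fun_eq_iff)

interpretation OP: vector_space "opscale :: complex \<Rightarrow> ('c \<Rightarrow> 'c \<Rightarrow> complex) \<Rightarrow> _"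
  by unfold_locales (auto simp: opscale_def algebra_simps fun_eq_iff)

lemma sum_fun_apply: "sum f A x = (\<Sum>a\<in>A. f a x)"
  by (induction A rule: infinite_finite_induct) auto

lemma sum_vscale_apply: "(\<Sum>v\<in>S. vscale (u v) (g v)) x = (\<Sum>v\<in>S. u v * g v x)"
  by (simp add: sum_fun_apply vscale_def)

definition std_basis :: "'c \<Rightarrow> 'c \<Rightarrow> complex" where
  "std_basis y = (\<lambda>x. if x = y then 1 else 0)"

lemma inj_std_basis: "inj std_basis"
  by (auto simp: inj_def std_basis_def fun_eq_iff)

lemma sum_vscale_std_basis: "(\<Sum>y\<in>UNIV. vscale (u y) (std_basis y)) = (u :: 'c::finite \<Rightarrow> complex)"
  by (simp add: fun_eq_iff sum_vscale_apply std_basis_def if_distrib[where f="\<lambda>t. _ * t"] cong: if_cong)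

lemma independent_std_basis: "VS.independent (range (std_basis :: 'c::finite \<Rightarrow> _))"
proof (rule VS.independent_if_scalars_zero)
  fix f :: "('c \<Rightarrow> complex) \<Rightarrow> complex" and x :: "'c \<Rightarrow> complex"
  assume zero: "(\<Sum>x\<in>range std_basis. vscale (f x) x) = 0" and "x \<in> range std_basis"
  then obtain y where y: "x = std_basis y" by auto
  have "0 = (\<Sum>z\<in>UNIV. vscale (f (std_basis z)) (std_basis z)) y"
    using zero by (simp add: sum.reindex inj_std_basis)
  also have "\<dots> = f x"
    by (simp add: sum_vscale_std_basis y)
  finally show "f x = 0" by simp
qed simp

interpretation VSF: finite_dimensional_vector_space
  "vscale :: complex \<Rightarrow> ('c::finite \<Rightarrow> complex) \<Rightarrow> _" "range std_basis"
proof unfold_locales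
  show "VS.span (range (std_basis :: 'c \<Rightarrow> _)) = UNIV"
  proof (intro set_eqI iffI)
    fix v :: "'c \<Rightarrow> complex"
    show "v \<in> VS.span (range std_basis)"
      by (subst sum_vscale_std_basis[symmetric]) (intro VS.span_sum VS.span_scale VS.span_base, simp)
  qed simp
qed (simp_all add: independent_std_basis)

lemma VS_dim_UNIV: "VS.dim (UNIV :: ('c::finite \<Rightarrow> complex) set) = CARD('c)"
  by (simp add: card_image inj_std_basis)

lemma cinner_sum_vscale_right:
  "cinner v (\<Sum>t\<in>T. vscale (u t) (g t)) = (\<Sum>t\<in>T. u t * cinner v (g t))"
  unfolding cinner_def sum_vscale_apply
  by (simp add: sum_distrib_left sum_distrib_right mult_ac sum.swap[where A=T])

locale orthonormal_family =
  fixes Phi :: "'i \<Rightarrow> ('c::finite \<Rightarrow> complex)" and I :: "'i set"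
  assumes finite_index: "finite I"
    and orthonormal: "\<And>b c. b \<in> I \<Longrightarrow> c \<in> I \<Longrightarrow> cinner (Phi b) (Phi c) = (if b = c then 1 else 0)"
begin

lemma inj_on: "inj_on Phi I"
  by (rule inj_onI) (metis orthonormal zero_neq_one)

lemma cinner_combination:
  assumes "c \<in> I"
  shows "cinner (Phi c) (\<Sum>b\<in>I. vscale (u b) (Phi b)) = u c"
  using assms finite_index
  by (simp add: cinner_sum_vscale_right orthonormal if_distrib[where f="\<lambda>t. _ * t"] cong: if_cong)

lemma independent: "VS.independent (Phi ` I)"
proof (rule VS.independent_if_scalars_zero)
  fix f :: "('c \<Rightarrow> complex) \<Rightarrow> complex" and v
  assume zero: "(\<Sum>x\<in>Phi ` I. vscale (f x) x) = 0" and "v \<in> Phi ` I"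
  then obtain c where c: "c \<in> I" "v = Phi c" by auto
  have "0 = cinner (Phi c) (\<Sum>b\<in>I. vscale (f (Phi b)) (Phi b))"
    using zero by (simp add: sum.reindex inj_on cinner_def)
  then show "f v = 0" by (simp add: cinner_combination c)
qed (simp add: finite_index)

lemma span_UNIV:
  assumes "card I = CARD('c)"
  shows "VS.span (Phi ` I) = UNIV"
proof -
  have "UNIV \<subseteq> VS.span (Phi ` I)"
    using VSF.card_eq_dim[of "Phi ` I" UNIV] independent assms finite_index
    by (simp add: card_image inj_on inj_std_basis)
  then show ?thesis by auto
qed

end

lemma linear_contract_snd: "Vector_Spaces.linear vscale vscale (contract_snd psi)"
  unfolding Vector_Spaces.linear_iff
proof (intro conjI allI)
  show "vector_space (vscale :: complex \<Rightarrow> ('a \<times> 'b \<Rightarrow> complex) \<Rightarrow> _)"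
    and "vector_space (vscale :: complex \<Rightarrow> ('a \<Rightarrow> complex) \<Rightarrow> _)"
    by (fact VS.vector_space_axioms)+
  show "contract_snd psi (x + y) = contract_snd psi x + contract_snd psi y" for x y
    by (simp add: contract_snd_def fun_eq_iff sum.distrib algebra_simps)
  show "contract_snd psi (vscale c x) = vscale c (contract_snd psi x)" for c x
    by (simp add: contract_snd_def vscale_def fun_eq_iff sum_distrib_left mult_ac)
qed

lemma contract_snd_product: "contract_snd psi (\<lambda>(i, k). v i * psi k) = vscale (cinner psi psi) v"
  by (simp add: fun_eq_iff contract_snd_def vscale_def cinner_def sum_distrib_left mult_ac)

lemma surj_contract_snd:
  assumes "cinner psi psi = 1"
  shows "surj (contract_snd psi :: ('a::finite \<times> 'b::finite \<Rightarrow> complex) \<Rightarrow> _)"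
proof (rule surjI)
  fix v :: "'a \<Rightarrow> complex"
  show "contract_snd psi (\<lambda>(i, k). v i * psi k) = v"
    by (simp add: contract_snd_product assms vscale_def)
qed

lemma outer_combination_eq_zero:
  fixes B :: "('c \<Rightarrow> complex) set"
  assumes indep: "VS.independent B" and "finite B"
    and zero: "(\<Sum>v\<in>B. opscale (f v) (outer v)) = 0" and "c \<in> B"
  shows "f c = 0"
proof -
  have "c \<noteq> 0" using assms VS.dependent_zero by blast
  then obtain j where j: "c j \<noteq> 0" by (auto simp: fun_eq_iff)
  \<comment> \<open>The \<open>j\<close>-th column of the vanishing combination is a vanishing combination of \<open>B\<close>.\<close>
  have "(\<Sum>v\<in>B. vscale (f v * cnj (v j)) v) = 0"
  proof (rule ext)
    fix i
    show "(\<Sum>v\<in>B. vscale (f v * cnj (v j)) v) i = 0 i"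
      using fun_cong[OF fun_cong[OF zero, of i], of j]
      by (simp add: sum_fun_apply opscale_def outer_def vscale_def mult_ac)
  qed
  then have "f c * cnj (c j) = 0"
    using VS.independentD[OF indep \<open>finite B\<close> order_refl, where u="\<lambda>v. f v * cnj (v j)"]
      \<open>c \<in> B\<close> by blast
  with j show ?thesis by simp
qed

lemma inj_on_outer:
  fixes B :: "('c \<Rightarrow> complex) set"
  assumes "VS.independent B" "finite B"
  shows "inj_on outer B"
proof (rule inj_onI, rule ccontr)
  fix c c' assume c: "c \<in> B" "c' \<in> B" "outer c = outer c'" "c \<noteq> c'"
  define f :: "('c \<Rightarrow> complex) \<Rightarrow> complex"
    where "f v = (if v = c then 1 else if v = c' then -1 else 0)" for v
  have "(\<Sum>v\<in>B. opscale (f v) (outer v)) = (\<Sum>v\<in>{c, c'}. opscale (f v) (outer v))"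
    using assms(2) c(1,2) by (intro sum.mono_neutral_right) (auto simp: f_def)
  also have "\<dots> = opscale 1 (outer c) + opscale (-1) (outer c')"
    using c(4) by (simp add: f_def)
  also have "\<dots> = 0"
    using c(3) by (simp add: opscale_def fun_eq_iff)
  finally have "f c = 0"
    by (rule outer_combination_eq_zero[OF assms _ c(1)])
  then show False by (simp add: f_def)
qed

lemma independent_outer_image:
  fixes B :: "('c \<Rightarrow> complex) set"
  assumes "VS.independent B" "finite B"
  shows "OP.independent (outer ` B)"
proof (rule OP.independent_if_scalars_zero)
  fix f :: "('c \<Rightarrow> 'c \<Rightarrow> complex) \<Rightarrow> complex" and M
  assume zero: "(\<Sum>x\<in>outer ` B. opscale (f x) x) = 0" and "M \<in> outer ` B"
  then obtain c where c: "c \<in> B" "M = outer c" by auto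
  have "(\<Sum>v\<in>B. opscale (f (outer v)) (outer v)) = (\<Sum>x\<in>outer ` B. opscale (f x) x)"
    by (simp add: sum.reindex[OF inj_on_outer[OF assms]] comp_def)
  also have "\<dots> = 0" by (fact zero)
  finally have "f (outer c) = 0"
    by (rule outer_combination_eq_zero[OF assms _ c(1)])
  with c(2) show "f M = 0" by simp
qed (simp add: assms)

lemma dim_le_dim_outer_image:
  fixes W :: "('c::finite \<Rightarrow> complex) set"
  assumes "finite W"
  shows "VS.dim W \<le> OP.dim (outer ` W)"
proof -
  obtain B where B: "B \<subseteq> W" "VS.independent B" "W \<subseteq> VS.span B" "card B = VS.dim W"
    by (rule VS.basis_exists)
  obtain C where C: "C \<subseteq> outer ` W" "OP.independent C" "outer ` W \<subseteq> OP.span C"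
    "card C = OP.dim (outer ` W)"
    by (rule OP.basis_exists)
  have "finite B"
    using B(1) assms by (rule finite_subset)
  have "finite C"
    using C(1) finite_imageI[OF assms] by (rule finite_subset)
  have "outer ` B \<subseteq> OP.span C"
    by (rule order_trans[OF image_mono[OF B(1)] C(3)])
  then have "card (outer ` B) \<le> card C"
    by (intro conjunct2[OF OP.independent_span_bound] \<open>finite C\<close>
        independent_outer_image[OF B(2) \<open>finite B\<close>])
  moreover have "card (outer ` B) = card B"
    using card_image[OF inj_on_outer[OF B(2) \<open>finite B\<close>]] .
  ultimately show ?thesis
    using B(4) C(4) by linarith
qed

theorem lemma1:
  fixes Phi :: "nat \<Rightarrow> ('a::finite \<times> 'b::finite \<Rightarrow> complex)"
    and psi :: "'b \<Rightarrow> complex"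
  assumes orthonormal: "\<forall>b\<in>{..<CARD('a) * CARD('b)}. \<forall>c\<in>{..<CARD('a) * CARD('b)}.
              cinner (Phi b) (Phi c) = (if b = c then 1 else 0)"
    and unit: "cinner psi psi = 1"
  shows "vector_space.dim opscale (mu Phi psi ` {..<CARD('a) * CARD('b)}) \<ge> CARD('a)"
proof -
  define I where "I = {..<CARD('a) * CARD('b)}"
  define W where "W = contract_snd psi ` Phi ` I"
  interpret orthonormal_family Phi I
    using orthonormal unfolding I_def by unfold_locales auto
  interpret contract: Vector_Spaces.linear vscale vscale "contract_snd psi"
    by (rule linear_contract_snd)
  have "card I = CARD('a \<times> 'b)"
    by (simp add: I_def)
  have "VS.span W = contract_snd psi ` VS.span (Phi ` I)"
    unfolding W_def by (rule contract.span_image)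
  also have "\<dots> = UNIV"
    by (simp only: span_UNIV[OF \<open>card I = CARD('a \<times> 'b)\<close>] surj_contract_snd[OF unit])
  finally have "VS.dim W = CARD('a)"
    by (subst VS.dim_span[symmetric]) (simp only: VS_dim_UNIV)
  moreover have "finite W"
    by (simp add: W_def I_def)
  moreover have "mu Phi psi ` I = outer ` W"
    by (simp add: W_def mu_def image_image)
  ultimately show ?thesis
    using dim_le_dim_outer_image[of W] unfolding I_def[symmetric] by simp
qed

end
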